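(* Let $G$ be any game and $\epsilon\ge0$. The negotiation function $\mathsf{nego}$ of $G$ has a least $\epsilon$-fixed point for the pointwise order on requirements, namely $v\mapsto\inf\{\lambda(v)\mid\lambda\text{ is an }\epsilon\text{-fixed point of }\mathsf{nego}\}$.
   Context: A game is a tuple $G=(\Pi,V,(V_i)_{i\in\Pi},E,\mu)$ where $\Pi$ is a finite set of players, $(V,E)$ is a directed graph in which every vertex has at least one outgoing edge, $(V_i)_{i\in\Pi}$ is a partition of $V$ ($V_i$ = vertices controlled by player $i$), and $\mu=(\mu_i)_{i\in\Pi}:V^\omega\to\mathbb{R}^\Pi$ is the payoff function. Plays are infinite paths, histories finite nonempty paths; $\rho_{\ge n}=\rho_n\rho_{n+1}\cdots$. A strategy for player $i$ from $v_0$ maps each history $hv$ starting at $v_0$ with $v\in V_i$ to a successor of $v$; $-i=\Pi\setminus\{i\}$; a complete profile $\bar\sigma$ has outcome $\langle\bar\sigma\rangle$; for a history $hv$, $\bar\sigma_{\|hv}$ is the profile from $v$ given by $\sigma_{j\|hv}(h')=\sigma_j(hh')$. A requirement is a map $\lambda:V\to\overline{\mathbb{R}}=\mathbb{R}\cup\{\pm\infty\}$, ordered pointwise. A play $\rho$ is $\lambda$-consistent if for all $i$ and $n$ with $\rho_n\in V_i$, $\mu_i(\rho_{\ge n})\ge\lambda(\rho_n)$. For $v\in V_i$, a profile $\bar\sigma_{-i}$ from $v$ is $\lambda$-rational if there is a strategy $\sigma_i$ such that, with $\bar\sigma=(\bar\sigma_{-i},\sigma_i)$, for every history $hu$ from $v$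 compatible with $\bar\sigma_{-i}$, the play $\langle\bar\sigma_{\|hu}\rangle$ is $\lambda$-consistent; $\lambda\mathsf{Rat}(v)$ is the set of such profiles. The negotiation function is $\mathsf{nego}(\lambda)(v)=\inf_{\bar\sigma_{-i}\in\lambda\mathsf{Rat}(v)}\sup_{\sigma_i}\mu_i(\langle\bar\sigma_{-i},\sigma_i\rangle)$ for $v\in V_i$, with $\inf\emptyset=+\infty$. For $\epsilon\ge0$, a requirement $\lambda$ is an $\epsilon$-fixed point of $\mathsf{nego}$ if for every $v\in V$, $\lambda(v)-\epsilon\le\mathsf{nego}(\lambda)(v)\le\lambda(v)+\epsilon$ (with the conventions $\pm\infty\pm\epsilon=\pm\infty$). *)

theory Defs
  imports "HOL-Library.Extended_Real"
begin

text \<open>A game is given by: a finite type of players 'p, a type of vertices 'v,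
 an edge relation E (every vertex has a successor), an owner map own
 (V_i = {v. own v = i}, a partition of the vertices), and a payoff function
 mu :: 'p => (nat => 'v) => real.  Requirements are maps 'v => ereal.\<close>

definition game :: "('v \<times> 'v) set \<Rightarrow> bool" where
  "game E \<longleftrightarrow> (\<forall>v. \<exists>w. (v, w) \<in> E)"

definition is_history :: "('v \<times> 'v) set \<Rightarrow> 'v \<Rightarrow> 'v list \<Rightarrow> bool" where
  "is_history E v h \<longleftrightarrow> h \<noteq> [] \<and> hd h = v \<and>
     (\<forall>k. Suc k < length h \<longrightarrow> (h ! k, h ! Suc k) \<in> E)"

text \<open>Strategies for player i from v0 (as total functions on lists, constrained on histories).\<close>
definition is_strategy :: "('v \<times> 'v) set \<Rightarrow> ('v \<Rightarrow> 'p) \<Rightarrow> 'p \<Rightarrow> 'v \<Rightarrow> ('v list \<Rightarrow> 'v) \<Rightarrow> bool" where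
  "is_strategy E own i v0 s \<longleftrightarrow>
     (\<forall>h. is_history E v0 h \<and> own (last h) = i \<longrightarrow> (last h, s h) \<in> E)"

text \<open>Profile of the players other than i (the i-component is irrelevant).\<close>
definition is_profile_minus :: "('v \<times> 'v) set \<Rightarrow> ('v \<Rightarrow> 'p) \<Rightarrow> 'p \<Rightarrow> 'v \<Rightarrow> ('p \<Rightarrow> 'v list \<Rightarrow> 'v) \<Rightarrow> bool" where
  "is_profile_minus E own i v0 \<sigma> \<longleftrightarrow> (\<forall>j. j \<noteq> i \<longrightarrow> is_strategy E own j v0 (\<sigma> j))"

fun gen_hist :: "('v \<Rightarrow> 'p) \<Rightarrow> ('p \<Rightarrow> 'v list \<Rightarrow> 'v) \<Rightarrow> 'v list \<Rightarrow> nat \<Rightarrow> 'v list" where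
  "gen_hist own \<sigma> h0 0 = h0"
| "gen_hist own \<sigma> h0 (Suc n) =
     (let h = gen_hist own \<sigma> h0 n in h @ [\<sigma> (own (last h)) h])"

definition outcome :: "('v \<Rightarrow> 'p) \<Rightarrow> ('p \<Rightarrow> 'v list \<Rightarrow> 'v) \<Rightarrow> 'v \<Rightarrow> (nat \<Rightarrow> 'v)" where
  "outcome own \<sigma> v0 = (\<lambda>n. last (gen_hist own \<sigma> [v0] n))"

text \<open>Residual profile after history hu = h @ [u]: sigma_j|hu (h') = sigma_j (h @ h').\<close>
definition residual :: "('p \<Rightarrow> 'v list \<Rightarrow> 'v) \<Rightarrow> 'v list \<Rightarrow> ('p \<Rightarrow> 'v list \<Rightarrow> 'v)" where
  "residual \<sigma> hu = (\<lambda>j h'. \<sigma> j (butlast hu @ h'))"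

definition suffix_play :: "(nat \<Rightarrow> 'v) \<Rightarrow> nat \<Rightarrow> (nat \<Rightarrow> 'v)" where
  "suffix_play \<rho> n = (\<lambda>k. \<rho> (n + k))"

definition consistent :: "('v \<Rightarrow> 'p) \<Rightarrow> ('p \<Rightarrow> (nat \<Rightarrow> 'v) \<Rightarrow> real) \<Rightarrow> ('v \<Rightarrow> ereal) \<Rightarrow> (nat \<Rightarrow> 'v) \<Rightarrow> bool" where
  "consistent own \<mu> lam \<rho> \<longleftrightarrow>
     (\<forall>n. ereal (\<mu> (own (\<rho> n)) (suffix_play \<rho> n)) \<ge> lam (\<rho> n))"

definition compatible_minus :: "('v \<Rightarrow> 'p) \<Rightarrow> 'p \<Rightarrow> ('p \<Rightarrow> 'v list \<Rightarrow> 'v) \<Rightarrow> 'v list \<Rightarrow> bool" where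
  "compatible_minus own i \<sigma> h \<longleftrightarrow>
     (\<forall>k. Suc k < length h \<longrightarrow> own (h ! k) \<noteq> i \<longrightarrow> h ! Suc k = \<sigma> (own (h ! k)) (take (Suc k) h))"

definition lambda_rational ::
  "('v \<times> 'v) set \<Rightarrow> ('v \<Rightarrow> 'p) \<Rightarrow> ('p \<Rightarrow> (nat \<Rightarrow> 'v) \<Rightarrow> real) \<Rightarrow> ('v \<Rightarrow> ereal) \<Rightarrow> 'v
     \<Rightarrow> ('p \<Rightarrow> 'v list \<Rightarrow> 'v) \<Rightarrow> bool" where
  "lambda_rational E own \<mu> lam v \<sigma> \<longleftrightarrow>
     is_profile_minus E own (own v) v \<sigma> \<and>
     (\<exists>s. is_strategy E own (own v) v s \<and>
        (\<forall>hu. is_history E v hu \<and> compatible_minus own (own v) \<sigma> hu \<longrightarrow>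
           consistent own \<mu> lam (outcome own (residual (\<sigma>(own v := s)) hu) (last hu))))"

definition nego ::
  "('v \<times> 'v) set \<Rightarrow> ('v \<Rightarrow> 'p) \<Rightarrow> ('p \<Rightarrow> (nat \<Rightarrow> 'v) \<Rightarrow> real) \<Rightarrow> ('v \<Rightarrow> ereal) \<Rightarrow> 'v \<Rightarrow> ereal" where
  "nego E own \<mu> lam v =
     (INF \<sigma>\<in>{\<sigma>. lambda_rational E own \<mu> lam v \<sigma>}.
        SUP s\<in>{s. is_strategy E own (own v) v s}.
          ereal (\<mu> (own v) (outcome own (\<sigma>(own v := s)) v)))"

definition eps_fixed_point ::
  "('v \<times> 'v) set \<Rightarrow> ('v \<Rightarrow> 'p) \<Rightarrow> ('p \<Rightarrow> (nat \<Rightarrow> 'v) \<Rightarrow> real) \<Rightarrow> real \<Rightarrow> ('v \<Rightarrow> ereal) \<Rightarrow> bool" where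
  "eps_fixed_point E own \<mu> \<epsilon> lam \<longleftrightarrow>
     (\<forall>v. lam v - ereal \<epsilon> \<le> nego E own \<mu> lam v \<and> nego E own \<mu> lam v \<le> lam v + ereal \<epsilon>)"

end

theory Submission
  imports Defs
begin

text \<open>The negotiation function is monotone and inflationary (\<open>\<lambda> \<le> nego \<lambda>\<close>: the first
  vertex of a \<open>\<lambda>\<close>-consistent outcome already gets its requirement). For such a map the lower
  half of the \<open>\<epsilon>\<close>-fixed-point condition is automatic, and the upper half
  \<open>f \<lambda> \<le> \<lambda> + \<epsilon>\<close> is preserved by pointwise infima by monotonicity.\<close>

lemma ereal_minus_real_le_iff: "(x::ereal) - ereal c \<le> y \<longleftrightarrow> x \<le> y + ereal c"
  by (cases x; cases y) auto

lemma lambda_rational_antimono: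
  assumes "lambda_rational E own \<mu> lam v \<sigma>" and "lam' \<le> lam"
  shows "lambda_rational E own \<mu> lam' v \<sigma>"
  using assms unfolding lambda_rational_def consistent_def le_fun_def
  by (meson order_trans)

lemma nego_mono:
  assumes "lam' \<le> lam"
  shows "nego E own \<mu> lam' v \<le> nego E own \<mu> lam v"
  unfolding nego_def
  by (rule INF_superset_mono) (auto intro: lambda_rational_antimono[OF _ assms])

lemma consistent_at_start:
  assumes "consistent own \<mu> lam \<rho>"
  shows "lam (\<rho> 0) \<le> ereal (\<mu> (own (\<rho> 0)) \<rho>)"
  using assms unfolding consistent_def suffix_play_def by (metis add_0 fun_eq_iff)

lemma nego_inflationary: "lam v \<le> nego E own \<mu> lam v"
  unfolding nego_def
proof (rule INF_greatest)
  fix \<sigma> assume "\<sigma> \<in> {\<sigma>. lambda_rational E own \<mu> lam v \<sigma>}"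
  then obtain s where s: "is_strategy E own (own v) v s" and
    cons: "\<And>hu. is_history E v hu \<Longrightarrow> compatible_minus own (own v) \<sigma> hu \<Longrightarrow>
           consistent own \<mu> lam (outcome own (residual (\<sigma>(own v := s)) hu) (last hu))"
    unfolding lambda_rational_def by auto
  have "is_history E v [v]" "compatible_minus own (own v) \<sigma> [v]"
    unfolding is_history_def compatible_minus_def by auto
  moreover have "residual (\<sigma>(own v := s)) [v] = \<sigma>(own v := s)"
    unfolding residual_def by auto
  ultimately have "consistent own \<mu> lam (outcome own (\<sigma>(own v := s)) v)"
    using cons[of "[v]"] by simp
  then have "lam v \<le> ereal (\<mu> (own v) (outcome own (\<sigma>(own v := s)) v))"
    using consistent_at_start by (fastforce simp: outcome_def)
  then show "lam v \<le> (SUP s\<in>{s. is_strategy E own (own v) v s}.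
          ereal (\<mu> (own v) (outcome own (\<sigma>(own v := s)) v)))"
    using s by (auto intro: SUP_upper2)
qed

lemma INF_is_eps_fixed_point_of_mono_inflationary:
  fixes f :: "('v \<Rightarrow> ereal) \<Rightarrow> 'v \<Rightarrow> ereal" and \<epsilon> :: real
  assumes mono: "\<And>lam' lam v. lam' \<le> lam \<Longrightarrow> f lam' v \<le> f lam v"
    and inflationary: "\<And>lam v. lam v \<le> f lam v"
    and "\<epsilon> \<ge> 0"
    and fp: "\<And>lam v. lam \<in> F \<Longrightarrow> lam v - ereal \<epsilon> \<le> f lam v \<and> f lam v \<le> lam v + ereal \<epsilon>"
  defines "lam0 \<equiv> (\<lambda>v. INF lam\<in>F. lam v)"
  shows "lam0 v - ereal \<epsilon> \<le> f lam0 v \<and> f lam0 v \<le> lam0 v + ereal \<epsilon>"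
proof
  have "lam0 v - ereal \<epsilon> \<le> lam0 v"
    using \<open>\<epsilon> \<ge> 0\<close> by (cases "lam0 v") auto
  also have "\<dots> \<le> f lam0 v" by (rule inflationary)
  finally show "lam0 v - ereal \<epsilon> \<le> f lam0 v" .
  have "f lam0 v - ereal \<epsilon> \<le> (INF lam\<in>F. lam v)"
  proof (rule INF_greatest)
    fix lam assume "lam \<in> F"
    then have "lam0 \<le> lam" unfolding lam0_def le_fun_def by (auto intro: INF_lower)
    then have "f lam0 v \<le> f lam v" by (rule mono)
    also have "\<dots> \<le> lam v + ereal \<epsilon>" using fp \<open>lam \<in> F\<close> by blast
    finally show "f lam0 v - ereal \<epsilon> \<le> lam v"
      unfolding ereal_minus_real_le_iff .
  qed
  then show "f lam0 v \<le> lam0 v + ereal \<epsilon>"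
    unfolding ereal_minus_real_le_iff lam0_def .
qed

theorem mainTheorem3:
  fixes E :: "('v \<times> 'v) set" and own :: "'v \<Rightarrow> 'p::finite"
    and \<mu> :: "'p \<Rightarrow> (nat \<Rightarrow> 'v) \<Rightarrow> real" and \<epsilon> :: real
  assumes "game E" and "\<epsilon> \<ge> 0"
  defines "lam0 \<equiv> (\<lambda>v. INF lam\<in>{lam. eps_fixed_point E own \<mu> \<epsilon> lam}. lam v)"
  shows "eps_fixed_point E own \<mu> \<epsilon> lam0 \<and>
         (\<forall>lam. eps_fixed_point E own \<mu> \<epsilon> lam \<longrightarrow> lam0 \<le> lam)"
proof
  show "eps_fixed_point E own \<mu> \<epsilon> lam0"
    unfolding eps_fixed_point_def lam0_def
    by (intro allI INF_is_eps_fixed_point_of_mono_inflationary nego_mono nego_inflationary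
        \<open>\<epsilon> \<ge> 0\<close>) (auto simp: eps_fixed_point_def)
  show "\<forall>lam. eps_fixed_point E own \<mu> \<epsilon> lam \<longrightarrow> lam0 \<le> lam"
    unfolding lam0_def le_fun_def by (auto intro: INF_lower)
qed

end
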